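(* Let $D$ be a domain in $\mathbb{C}^m$ and $\xi(\cdot)=(\xi_\alpha(\cdot))_{\alpha\in\mathbb{N}^n}$ a functional-valued function on $D$ with $\xi(w)\in\ell_1^{(n)}$ for every $w\in D$. Suppose that for every bounded domain $\Omega'\subset\mathbb{C}^n$, every $z_0\in\Omega'$ and every $F\in A^2(\Omega')$, the function $w\mapsto(\xi(w)\cdot F)(z_0)$ is holomorphic on $D$. Then $\xi(\cdot)$ is holomorphic and satisfies the locally uniformly bounded property on $D$.
   Context: $\mathbb{N}=\mathbb{Z}_{\ge 0}$. $\ell_1^{(n)}$ is the space of sequences $\xi=(\xi_\alpha)_{\alpha\in\mathbb{N}^n}$ of complex numbers with $\sum_{\alpha}|\xi_\alpha|\rho^{|\alpha|}<+\infty$ for every $\rho>0$. For a holomorphic germ $F$ at $z_0\in\mathbb{C}^n$, $(\xi\cdot F)(z_0)\coloneqq\sum_\alpha \xi_\alpha F^{(\alpha)}(z_0)/\alpha!$. $A^2(\Omega')$ is the space of holomorphic functions $F$ on $\Omega'$ with $\int_{\Omega'}|F|^2<+\infty$. $\xi(\cdot)$ is holomorphic on $D$ if each $\xi_\alpha$ is holomorphic on $D$; it satisfies the locally uniformly bounded property on $D$ if for every $w\in D$ and $\rho>0$ there is a neighborhood $V$ of $w$ with $\sup_{w'\in V}\sum_\alpha|\xi_\alpha(w')|\rho^{|\alpha|}<+\infty$. *)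

theory Defs
  imports "HOL-Analysis.Analysis"
begin

text \<open>Holomorphy of a function of several complex variables on an open set:
  complex Frechet differentiability at every point (the derivative is a
  complex-linear form v \<mapsto> sum_k a_k v_k).\<close>
definition holo_on :: "(complex^'k) set \<Rightarrow> (complex^'k \<Rightarrow> complex) \<Rightarrow> bool" where
  "holo_on S f \<longleftrightarrow> open S \<and>
     (\<forall>z\<in>S. \<exists>a::complex^'k. (f has_derivative (\<lambda>v. \<Sum>k\<in>UNIV. a$k * v$k)) (at z))"

definition mlen :: "('n::finite \<Rightarrow> nat) \<Rightarrow> nat" where
  "mlen \<alpha> = (\<Sum>j\<in>UNIV. \<alpha> j)"

definition mfact :: "('n::finite \<Rightarrow> nat) \<Rightarrow> nat" where
  "mfact \<alpha> = (\<Prod>j\<in>UNIV. fact (\<alpha> j))"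

definition pdiff :: "'n \<Rightarrow> (complex^'n \<Rightarrow> complex) \<Rightarrow> complex^'n \<Rightarrow> complex" where
  "pdiff j F z = deriv (\<lambda>t. F (z + axis j t)) 0"

text \<open>Derivative F^(alpha): apply pdiff j alpha_j times for each coordinate j,
  in a fixed (chosen) order of the coordinates (for holomorphic F the order is irrelevant).\<close>
definition coord_list :: "'n::finite list" where
  "coord_list = (SOME xs. distinct xs \<and> set xs = UNIV)"

definition mderiv :: "('n::finite \<Rightarrow> nat) \<Rightarrow> (complex^'n \<Rightarrow> complex) \<Rightarrow> complex^'n \<Rightarrow> complex" where
  "mderiv \<alpha> F = foldr (\<lambda>j G. (pdiff j ^^ \<alpha> j) G) coord_list F"

definition ell1 :: "(('n::finite \<Rightarrow> nat) \<Rightarrow> complex) \<Rightarrow> bool" where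
  "ell1 \<xi> \<longleftrightarrow> (\<forall>\<rho>>0. (\<lambda>\<alpha>. norm (\<xi> \<alpha>) * \<rho> ^ mlen \<alpha>) summable_on UNIV)"

definition pairing :: "(('n::finite \<Rightarrow> nat) \<Rightarrow> complex) \<Rightarrow> (complex^'n \<Rightarrow> complex) \<Rightarrow> complex^'n \<Rightarrow> complex" where
  "pairing \<xi> F z0 = (\<Sum>\<^sub>\<infinity>\<alpha>. \<xi> \<alpha> * mderiv \<alpha> F z0 / of_nat (mfact \<alpha>))"

definition A2 :: "(complex^'n) set \<Rightarrow> (complex^'n \<Rightarrow> complex) set" where
  "A2 \<Omega> = {F. holo_on \<Omega> F \<and> (\<lambda>z. (norm (F z))\<^sup>2) integrable_on \<Omega>}"

definition domain :: "(complex^'k) set \<Rightarrow> bool" where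
  "domain S \<longleftrightarrow> open S \<and> connected S \<and> S \<noteq> {}"

definition loc_unif_bounded :: "(complex^'m) set \<Rightarrow> (complex^'m \<Rightarrow> ('n::finite \<Rightarrow> nat) \<Rightarrow> complex) \<Rightarrow> bool" where
  "loc_unif_bounded D \<xi> \<longleftrightarrow> (\<forall>w\<in>D. \<forall>\<rho>>0. \<exists>V. open V \<and> w \<in> V \<and> V \<subseteq> D \<and>
      (\<exists>B. \<forall>w'\<in>V. (\<Sum>\<^sub>\<infinity>\<alpha>. norm (\<xi> w' \<alpha>) * \<rho> ^ mlen \<alpha>) \<le> B))"

end

(*
  For coefficients c with |c_beta| <= rho^|beta| the power series F = sum_beta c_beta z^beta
  converges on the polydisc of radius 1/rho, belongs to A^2 of a small ball around 0 and
  satisfies F^(beta)(0)/beta! = c_beta. The hypothesis therefore makes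
  w |-> sum_beta xi_beta(w) c_beta holomorphic; choosing c as the indicator of alpha shows that
  each xi_alpha is holomorphic.

  For the local bound fix rho and a compact ball K in D. The admissible families c form a
  compact product space X, on which the maps c |-> |sum_beta xi_beta(w) c_beta|, w in K, are
  continuous and pointwise bounded. By Baire's theorem they are bounded by some N on a nonempty
  open subset of X, which contains a cylinder fixing only finitely many coordinates A. Moving
  the free coordinates between 0 and rho^|beta| times the phase of the conjugate of xi_beta(w)
  bounds the tail sum over beta outside A of |xi_beta(w)| rho^|beta| by 2N, while the finitely
  many terms indexed by A depend continuously on w.
*)

theory Submission
  imports Defs
begin

lemma has_sum_sum:
  fixes f :: "'i \<Rightarrow> 'a \<Rightarrow> 'b::topological_comm_monoid_add"
  assumes "finite I" "\<And>i. i \<in> I \<Longrightarrow> (f i has_sum s i) A"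
  shows "((\<lambda>x. \<Sum>i\<in>I. f i x) has_sum (\<Sum>i\<in>I. s i)) A"
  using assms by (induction I rule: finite_induct) (auto intro: has_sum_add)

lemma eventually_infsum_tail_less:
  fixes g :: "'a \<Rightarrow> real"
  assumes "g summable_on UNIV" "e > 0"
  shows "\<forall>\<^sub>F A in finite_subsets_at_top UNIV. (\<Sum>\<^sub>\<infinity>a\<in>-A. g a) < e"
proof -
  have "(sum g \<longlongrightarrow> infsum g UNIV) (finite_subsets_at_top UNIV)"
    using assms(1) has_sum_def has_sum_infsum by blast
  then have "\<forall>\<^sub>F A in finite_subsets_at_top UNIV. dist (sum g A) (infsum g UNIV) < e"
    using tendstoD assms(2) by blast
  moreover have "\<forall>\<^sub>F A in finite_subsets_at_top UNIV. finite A"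
    by (rule eventually_finite_subsets_at_top_weakI) auto
  ultimately show ?thesis
  proof eventually_elim
    case (elim A)
    then have "infsum g (-A) = infsum g UNIV - sum g A"
      using infsum_Diff[of g UNIV A] assms(1) by (simp add: Compl_eq_Diff_UNIV)
    with elim show ?case by (auto simp: dist_real_def abs_less_iff)
  qed
qed

lemma norm_infsum_minus_sum_le:
  fixes f :: "'a \<Rightarrow> 'b::banach"
  assumes g: "g summable_on UNIV" and bound: "\<And>a. norm (f a) \<le> g a" and "finite A"
  shows "norm ((\<Sum>\<^sub>\<infinity>a. f a) - (\<Sum>a\<in>A. f a)) \<le> (\<Sum>\<^sub>\<infinity>a\<in>-A. g a)"
proof -
  have norm_f: "(\<lambda>a. norm (f a)) summable_on UNIV"
    by (rule Infinite_Sum.abs_summable_on_comparison_test'[OF g]) (use bound in auto)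
  have "(\<Sum>\<^sub>\<infinity>a. f a) - (\<Sum>a\<in>A. f a) = (\<Sum>\<^sub>\<infinity>a\<in>-A. f a)"
    using infsum_Diff[of f UNIV A] abs_summable_summable[OF norm_f] \<open>finite A\<close>
    by (simp add: Compl_eq_Diff_UNIV)
  also have "norm \<dots> \<le> (\<Sum>\<^sub>\<infinity>a\<in>-A. norm (f a))"
    by (rule norm_infsum_bound) (simp add: summable_on_subset_banach[OF norm_f])
  also have "\<dots> \<le> (\<Sum>\<^sub>\<infinity>a\<in>-A. g a)"
    by (intro infsum_mono summable_on_subset_banach[OF norm_f] summable_on_subset_banach[OF g] bound) auto
  finally show ?thesis .
qed

lemma eventually_norm_sum_minus_infsum_le:
  fixes f :: "'x \<Rightarrow> 'a \<Rightarrow> 'b::banach"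
  assumes g: "g summable_on UNIV" and bound: "\<And>x a. x \<in> S \<Longrightarrow> norm (f x a) \<le> g a * M x"
    and M: "\<And>x. x \<in> S \<Longrightarrow> 0 \<le> M x" and "e > 0"
  shows "\<forall>\<^sub>F A in finite_subsets_at_top UNIV.
           \<forall>x\<in>S. norm ((\<Sum>a\<in>A. f x a) - (\<Sum>\<^sub>\<infinity>a. f x a)) \<le> e * M x"
proof -
  have "\<forall>\<^sub>F A in finite_subsets_at_top UNIV. finite A"
    by (rule eventually_finite_subsets_at_top_weakI) auto
  with eventually_infsum_tail_less[OF g \<open>e > 0\<close>] show ?thesis
  proof eventually_elim
    case (elim A)
    show ?case
    proof
      fix x
      assume "x \<in> S"
      have "norm ((\<Sum>a\<in>A. f x a) - (\<Sum>\<^sub>\<infinity>a. f x a)) \<le> (\<Sum>\<^sub>\<infinity>a\<in>-A. g a * M x)"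
        unfolding norm_minus_commute[of "sum _ _"]
        by (rule norm_infsum_minus_sum_le) (use g bound \<open>x \<in> S\<close> elim in \<open>auto simp: summable_on_cmult_left\<close>)
      also have "\<dots> = (\<Sum>\<^sub>\<infinity>a\<in>-A. g a) * M x"
        by (rule infsum_cmult_left) (rule summable_on_subset_banach[OF g], simp)
      also have "\<dots> \<le> e * M x"
        using elim M[OF \<open>x \<in> S\<close>] by (intro mult_right_mono) auto
      finally show "norm ((\<Sum>a\<in>A. f x a) - (\<Sum>\<^sub>\<infinity>a. f x a)) \<le> e * M x" .
    qed
  qed
qed

lemma uniform_limit_infsum:
  fixes f :: "'x \<Rightarrow> 'a \<Rightarrow> 'b::banach"
  assumes g: "g summable_on UNIV" and bound: "\<And>x a. x \<in> S \<Longrightarrow> norm (f x a) \<le> g a"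
  shows "uniform_limit S (\<lambda>A x. \<Sum>a\<in>A. f x a) (\<lambda>x. \<Sum>\<^sub>\<infinity>a. f x a) (finite_subsets_at_top UNIV)"
  unfolding uniform_limit_iff
proof (intro allI impI)
  fix e :: real
  assume "e > 0"
  have "\<forall>\<^sub>F A in finite_subsets_at_top UNIV. \<forall>x\<in>S. norm ((\<Sum>a\<in>A. f x a) - (\<Sum>\<^sub>\<infinity>a. f x a)) \<le> e / 2 * 1"
    by (rule eventually_norm_sum_minus_infsum_le[OF g]) (use bound \<open>e > 0\<close> in auto)
  then show "\<forall>\<^sub>F A in finite_subsets_at_top UNIV. \<forall>x\<in>S. dist (\<Sum>a\<in>A. f x a) (\<Sum>\<^sub>\<infinity>a. f x a) < e"
    by eventually_elim (use \<open>e > 0\<close> in \<open>auto simp: dist_norm\<close>)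
qed

lemma infsum_mult_delta:
  fixes x :: "'a::{comm_monoid_add, t2_space, mult_zero}"
  shows "(\<Sum>\<^sub>\<infinity>j. f j * (if j = i then x else 0)) = f i * x"
proof -
  have "(\<Sum>\<^sub>\<infinity>j. f j * (if j = i then x else 0)) = (\<Sum>\<^sub>\<infinity>j\<in>{i}. f j * (if j = i then x else 0))"
    by (rule infsum_cong_neutral) auto
  then show ?thesis
    by simp
qed

lemma filterlim_from_nat_lessThan_at_top:
  "filterlim (\<lambda>n. from_nat ` {..<n} :: 'a::countable set) (finite_subsets_at_top UNIV) sequentially"
  unfolding filterlim_finite_subsets_at_top
proof (safe, goal_cases)
  case (1 X)
  then obtain n where n: "to_nat ` X \<subseteq> {..<n}"
    using finite_nat_set_iff_bounded[of "to_nat ` X"] by blast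
  have "X \<subseteq> from_nat ` {..<m}" if "m \<ge> n" for m
  proof
    fix x assume "x \<in> X"
    then have "to_nat x \<in> {..<m}" using n that by auto
    then show "x \<in> from_nat ` {..<m}" by (metis from_nat_to_nat image_eqI)
  qed
  then show ?case by (auto simp: eventually_sequentially)
qed

lemma has_derivative_infsum:
  fixes f :: "'i::countable \<Rightarrow> 'a::real_normed_vector \<Rightarrow> 'b::banach"
  assumes "convex S" "x \<in> S"
    and deriv: "\<And>i x. x \<in> S \<Longrightarrow> (f i has_derivative f' i x) (at x within S)"
    and bound: "\<And>i x h. x \<in> S \<Longrightarrow> norm (f' i x h) \<le> g i * norm h"
    and g: "g summable_on UNIV"
    and summable: "\<And>x. x \<in> S \<Longrightarrow> (\<lambda>i. f i x) summable_on UNIV"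
  shows "((\<lambda>x. \<Sum>\<^sub>\<infinity>i. f i x) has_derivative (\<lambda>h. \<Sum>\<^sub>\<infinity>i. f' i x h)) (at x within S)"
proof -
  \<comment> \<open>Enumerating the index type turns the net of finite partial sums into a sequence,
    to which \<open>has_derivative_sequence\<close> applies.\<close>
  define P where "P n = (from_nat ` {..<n} :: 'i set)" for n :: nat
  have P: "filterlim P (finite_subsets_at_top UNIV) sequentially"
    unfolding P_def by (rule filterlim_from_nat_lessThan_at_top)
  have partial_sums: "(\<lambda>n. \<Sum>i\<in>P n. f i y) \<longlonglongrightarrow> (\<Sum>\<^sub>\<infinity>i. f i y)" if "y \<in> S" for y
    using summable[OF that] P by (auto simp: summable_iff_has_sum_infsum has_sum_def
        intro: filterlim_compose[of "sum (\<lambda>i. f i y)"])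
  have uniform: "\<forall>\<^sub>F n in sequentially. \<forall>y\<in>S. \<forall>h.
      norm ((\<Sum>i\<in>P n. f' i y h) - (\<Sum>\<^sub>\<infinity>i. f' i y h)) \<le> e * norm h" if "e > 0" for e
  proof -
    have "\<forall>\<^sub>F A in finite_subsets_at_top UNIV. \<forall>yh\<in>S \<times> UNIV.
        norm ((\<Sum>i\<in>A. f' i (fst yh) (snd yh)) - (\<Sum>\<^sub>\<infinity>i. f' i (fst yh) (snd yh))) \<le> e * norm (snd yh)"
      by (rule eventually_norm_sum_minus_infsum_le[OF g _ _ that]) (auto simp: bound)
    then have "\<forall>\<^sub>F A in finite_subsets_at_top UNIV. \<forall>y\<in>S. \<forall>h.
        norm ((\<Sum>i\<in>A. f' i y h) - (\<Sum>\<^sub>\<infinity>i. f' i y h)) \<le> e * norm h"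
      by simp
    then show ?thesis
      using filterlim_iff[THEN iffD1, OF P, rule_format] by blast
  qed
  have partial_derivs: "\<And>n y. y \<in> S \<Longrightarrow>
      ((\<lambda>y. \<Sum>i\<in>P n. f i y) has_derivative (\<lambda>h. \<Sum>i\<in>P n. f' i y h)) (at y within S)"
    by (intro has_derivative_sum deriv)
  obtain G where G: "\<And>y. y \<in> S \<Longrightarrow> (\<lambda>n. \<Sum>i\<in>P n. f i y) \<longlonglongrightarrow> G y \<and>
      (G has_derivative (\<lambda>h. \<Sum>\<^sub>\<infinity>i. f' i y h)) (at y within S)"
    using has_derivative_sequence[OF \<open>convex S\<close> partial_derivs uniform \<open>x \<in> S\<close>
        partial_sums[OF \<open>x \<in> S\<close>]] by blast
  have "G y = (\<Sum>\<^sub>\<infinity>i. f i y)" if "y \<in> S" for y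
    using G[OF that] partial_sums[OF that] LIMSEQ_unique by blast
  then show ?thesis
    using G[OF \<open>x \<in> S\<close>] \<open>x \<in> S\<close> by (auto intro: has_derivative_transform_within[where d=1])
qed

lemma norm_nth_le_if_norm_le: "norm x \<le> s \<Longrightarrow> norm (x$k) \<le> s"
  using Finite_Cartesian_Product.norm_nth_le[of x k] by linarith

lemma norm_axis: "norm (axis k t :: 'a::real_normed_vector^'n) = norm t"
  by (simp add: norm_vec_def L2_set_def axis_def if_distrib[of norm] if_distrib[of "\<lambda>x. x\<^sup>2"] cong: if_cong)

lemma bounded_linear_axis: "bounded_linear (axis k :: 'a::real_normed_vector \<Rightarrow> 'a^'n)"
proof (rule bounded_linear_intro[where K=1])
  show "norm (axis k x :: 'a^'n) \<le> norm x * 1" for x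
    by (simp add: norm_axis)
qed (simp_all add: axis_def vec_eq_iff)

lemma sgn_cnj_mult: "z * sgn (cnj z) = of_real (norm z)"
proof (cases "z = 0")
  case False
  have "z * cnj z = of_real ((norm z)\<^sup>2)"
    by (rule complex_norm_square[symmetric])
  then show ?thesis
    using False by (simp add: sgn_div_norm scaleR_conv_of_real power2_eq_square field_simps)
qed simp

lemma holo_on_imp_continuous_on:
  assumes "holo_on S f"
  shows "continuous_on S f"
proof (rule continuous_at_imp_continuous_on, rule ballI)
  fix z
  assume "z \<in> S"
  then obtain a where "(f has_derivative (\<lambda>v. \<Sum>k\<in>UNIV. a$k * v$k)) (at z)"
    using assms unfolding holo_on_def by blast
  then show "isCont f z"
    by (rule has_derivative_continuous)
qed

lemma sum_atMost_power_le:
  fixes q :: real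
  assumes "0 \<le> q" "q < 1"
  shows "(\<Sum>k\<le>N. q ^ k) \<le> 1 / (1 - q)"
proof -
  have "(\<Sum>k\<le>N. q ^ k) \<le> (\<Sum>k. q ^ k)"
    by (rule sum_le_suminf) (use assms in \<open>auto intro: summable_geometric\<close>)
  also have "\<dots> = 1 / (1 - q)"
    using assms by (simp add: suminf_geometric)
  finally show ?thesis .
qed

lemma of_nat_mult_power_le:
  fixes q :: real
  assumes "0 \<le> q" "q < 1"
  shows "real m * q ^ m \<le> 1 / (1 - q)"
proof -
  have "real m * q ^ m = (\<Sum>k<m. q ^ m)"
    by simp
  also have "\<dots> \<le> (\<Sum>k<m. q ^ k)"
    by (rule sum_mono) (use assms in \<open>auto intro: power_decreasing\<close>)
  also have "\<dots> \<le> (\<Sum>k\<le>m. q ^ k)"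
    by (rule sum_mono2) (use assms in auto)
  also have "\<dots> \<le> 1 / (1 - q)"
    by (rule sum_atMost_power_le[OF assms])
  finally show ?thesis .
qed

section \<open>Power series in several complex variables\<close>

lemma power_mlen: "q ^ mlen \<beta> = (\<Prod>j\<in>UNIV. q ^ \<beta> j)"
  by (simp add: mlen_def power_sum)

lemma mlen_fun_upd: "mlen (\<beta>(k := m)) = m + sum \<beta> (-{k})"
proof -
  have "mlen (\<beta>(k := m)) = m + sum (\<beta>(k := m)) (-{k})"
    unfolding mlen_def by (subst sum.remove[of UNIV k]) (auto simp: Compl_eq_Diff_UNIV)
  also have "sum (\<beta>(k := m)) (-{k}) = sum \<beta> (-{k})"
    by (rule sum.cong) auto
  finally show ?thesis .
qed

lemma mlen_split: "mlen \<beta> = \<beta> k + sum \<beta> (-{k})"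
  using mlen_fun_upd[of \<beta> k "\<beta> k"] by simp

lemma le_mlen: "\<beta> k \<le> mlen \<beta>"
  using mlen_split[of \<beta> k] by simp

lemma summable_on_power_mlen:
  fixes q :: real
  assumes "0 \<le> q" "q < 1"
  shows "(\<lambda>\<beta>::'n::finite \<Rightarrow> nat. q ^ mlen \<beta>) summable_on UNIV"
proof (rule nonneg_bdd_above_summable_on)
  show "bdd_above (sum (\<lambda>\<beta>::'n \<Rightarrow> nat. q ^ mlen \<beta>) ` {F. F \<subseteq> UNIV \<and> finite F})"
  proof (rule bdd_aboveI2)
    fix P :: "('n \<Rightarrow> nat) set"
    assume "P \<in> {F. F \<subseteq> UNIV \<and> finite F}"
    then have "finite P" by simp
    define N where "N = Max (insert 0 ((\<lambda>(\<beta>, j). \<beta> j) ` (P \<times> UNIV)))"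
    have "P \<subseteq> PiE UNIV (\<lambda>_. {..N})"
      using \<open>finite P\<close> by (auto simp: N_def intro!: Max_ge)
    then have "(\<Sum>\<beta>\<in>P. q ^ mlen \<beta>) \<le> (\<Sum>\<beta>\<in>PiE UNIV (\<lambda>_::'n. {..N}). q ^ mlen \<beta>)"
      by (intro sum_mono2) (use assms in \<open>auto simp: finite_PiE\<close>)
    also have "\<dots> = (\<Prod>j\<in>(UNIV::'n set). \<Sum>k\<le>N. q ^ k)"
      by (subst prod_sum_PiE) (auto simp: power_mlen)
    also have "\<dots> \<le> (\<Prod>j\<in>(UNIV::'n set). 1 / (1 - q))"
      by (rule prod_mono) (use assms sum_atMost_power_le in \<open>auto intro: sum_nonneg\<close>)
    finally show "(\<Sum>\<beta>\<in>P. q ^ mlen \<beta>) \<le> (\<Prod>j\<in>(UNIV::'n set). 1 / (1 - q))" .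
  qed
qed (use assms in auto)

lemma has_sum_shift_multiindex:
  assumes "\<And>\<beta>. \<beta> k = 0 \<Longrightarrow> f \<beta> = 0"
  shows "((\<lambda>\<gamma>. f (\<gamma>(k := Suc (\<gamma> k)))) has_sum s) UNIV \<longleftrightarrow> (f has_sum s) UNIV"
proof -
  have "bij_betw (\<lambda>\<gamma>. \<gamma>(k := Suc (\<gamma> k))) UNIV {\<beta>. \<beta> k \<noteq> 0}"
    by (rule bij_betw_byWitness[where f'="\<lambda>\<beta>. \<beta>(k := \<beta> k - 1)"]) auto
  then have "((\<lambda>\<gamma>. f (\<gamma>(k := Suc (\<gamma> k)))) has_sum s) UNIV \<longleftrightarrow> (f has_sum s) {\<beta>. \<beta> k \<noteq> 0}"
    by (rule has_sum_reindex_bij_betw)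
  also have "\<dots> \<longleftrightarrow> (f has_sum s) UNIV"
    by (rule has_sum_cong_neutral) (use assms in auto)
  finally show ?thesis .
qed

lemma coord_list: "distinct (coord_list :: 'n::finite list) \<and> set (coord_list :: 'n list) = UNIV"
  unfolding coord_list_def by (rule someI_ex) (use finite_distinct_list[of "UNIV :: 'n set"] in auto)

lemma distinct_coord_list: "distinct coord_list"
  using coord_list by blast

lemma set_coord_list: "set coord_list = UNIV"
  using coord_list by blast

definition mmonom :: "('n::finite \<Rightarrow> nat) \<Rightarrow> complex^'n \<Rightarrow> complex" where
  "mmonom \<beta> z = (\<Prod>j\<in>UNIV. z$j ^ \<beta> j)"

lemma mmonom_fun_upd: "mmonom (\<beta>(k := m)) z = z$k ^ m * (\<Prod>j\<in>-{k}. z$j ^ \<beta> j)"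
  unfolding mmonom_def
  by (subst prod.remove[of UNIV k]) (auto simp: Compl_eq_Diff_UNIV intro!: prod.cong)

lemma norm_mmonom_le:
  assumes "\<And>k. norm (z$k) \<le> s"
  shows "norm (mmonom \<beta> z) \<le> s ^ mlen \<beta>"
proof -
  have "norm (mmonom \<beta> z) = (\<Prod>k\<in>UNIV. norm (z$k) ^ \<beta> k)"
    by (simp add: mmonom_def prod_norm[symmetric] norm_power)
  also have "\<dots> \<le> (\<Prod>k\<in>UNIV. s ^ \<beta> k)"
    by (rule prod_mono) (use assms in \<open>auto intro: power_mono\<close>)
  finally show ?thesis by (simp add: power_mlen)
qed

lemma has_derivative_mmonom:
  "(mmonom \<beta> has_derivative
     (\<lambda>h. \<Sum>k\<in>UNIV. of_nat (\<beta> k) * mmonom (\<beta>(k := \<beta> k - 1)) x * h$k)) (at x within S)"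
proof -
  have "((\<lambda>x. x$k ^ \<beta> k) has_derivative (\<lambda>h. of_nat (\<beta> k) * h$k * x$k ^ (\<beta> k - 1))) (at x within S)"
    for k
    by (intro has_derivative_power bounded_linear_imp_has_derivative bounded_linear_vec_nth)
  then have "(mmonom \<beta> has_derivative (\<lambda>h. \<Sum>k\<in>UNIV.
      of_nat (\<beta> k) * h$k * x$k ^ (\<beta> k - 1) * (\<Prod>j\<in>UNIV - {k}. x$j ^ \<beta> j))) (at x within S)"
    unfolding mmonom_def[abs_def] by (rule has_derivative_prod)
  then show ?thesis
    by (simp add: mmonom_fun_upd Compl_eq_Diff_UNIV mult_ac)
qed

lemma norm_mmonom_pderiv_le:
  assumes "\<And>j. norm (z$j) \<le> s"
  shows "norm (of_nat (\<beta> k) * mmonom (\<beta>(k := \<beta> k - 1)) z) \<le> real (\<beta> k) * s ^ (mlen \<beta> - 1)"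
proof (cases "\<beta> k = 0")
  case False
  then have "mlen (\<beta>(k := \<beta> k - 1)) = mlen \<beta> - 1"
    using mlen_fun_upd[of \<beta> k] mlen_split[of \<beta> k] by simp
  then show ?thesis
    using norm_mmonom_le[OF assms, of "\<beta>(k := \<beta> k - 1)"] by (simp add: norm_mult mult_left_mono)
qed simp

lemma norm_mmonom_derivative_le:
  fixes x h :: "complex^'n::finite"
  assumes x: "\<And>j. norm (x$j) \<le> s" and "0 \<le> s"
  shows "norm (\<Sum>k\<in>UNIV. of_nat (\<beta> k) * mmonom (\<beta>(k := \<beta> k - 1)) x * h$k)
           \<le> real (mlen \<beta>) * s ^ (mlen \<beta> - 1) * norm h"
proof -
  have "norm (\<Sum>k\<in>UNIV. of_nat (\<beta> k) * mmonom (\<beta>(k := \<beta> k - 1)) x * h$k)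
      \<le> (\<Sum>k\<in>UNIV. norm (of_nat (\<beta> k) * mmonom (\<beta>(k := \<beta> k - 1)) x * h$k))"
    by (rule norm_sum)
  also have "\<dots> \<le> (\<Sum>k\<in>UNIV. real (\<beta> k) * s ^ (mlen \<beta> - 1) * norm h)"
  proof (rule sum_mono)
    fix k
    have "norm (of_nat (\<beta> k) * mmonom (\<beta>(k := \<beta> k - 1)) x) \<le> real (\<beta> k) * s ^ (mlen \<beta> - 1)"
      by (rule norm_mmonom_pderiv_le[OF x])
    moreover have "norm (h$k) \<le> norm h"
      by (rule Finite_Cartesian_Product.norm_nth_le)
    ultimately show "norm (of_nat (\<beta> k) * mmonom (\<beta>(k := \<beta> k - 1)) x * h$k) \<le>
        real (\<beta> k) * s ^ (mlen \<beta> - 1) * norm h"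
      unfolding norm_mult[of _ "h$k"] by (rule mult_mono) (use \<open>0 \<le> s\<close> in auto)
  qed
  also have "\<dots> = real (mlen \<beta>) * s ^ (mlen \<beta> - 1) * norm h"
    by (simp add: mlen_def sum_distrib_right)
  finally show ?thesis .
qed

definition mpower_series :: "(('n::finite \<Rightarrow> nat) \<Rightarrow> complex) \<Rightarrow> complex^'n \<Rightarrow> complex" where
  "mpower_series c z = (\<Sum>\<^sub>\<infinity>\<beta>. c \<beta> * mmonom \<beta> z)"

definition abs_convergent_below :: "real \<Rightarrow> (('n::finite \<Rightarrow> nat) \<Rightarrow> complex) \<Rightarrow> bool" where
  "abs_convergent_below R c \<longleftrightarrow>
     (\<forall>s. 0 < s \<and> s < R \<longrightarrow> (\<lambda>\<beta>. norm (c \<beta>) * s ^ mlen \<beta>) summable_on UNIV)"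

definition pderiv_coeffs :: "'n::finite \<Rightarrow> (('n \<Rightarrow> nat) \<Rightarrow> complex) \<Rightarrow> ('n \<Rightarrow> nat) \<Rightarrow> complex" where
  "pderiv_coeffs k c \<gamma> = of_nat (Suc (\<gamma> k)) * c (\<gamma>(k := Suc (\<gamma> k)))"

lemma abs_convergent_below_summable_mlen:
  assumes conv: "abs_convergent_below R c" and s: "0 < s" "s < R"
  shows "(\<lambda>\<beta>. real (mlen \<beta>) * norm (c \<beta>) * s ^ (mlen \<beta> - 1)) summable_on UNIV"
proof -
  define s' where "s' = (s + R) / 2"
  define q where "q = s / s'"
  have s': "s < s'" "s' < R" and q: "0 \<le> q" "q < 1" and qs': "q * s' = s"
    using s by (auto simp: s'_def q_def)
  have summable: "(\<lambda>\<beta>. norm (c \<beta>) * s' ^ mlen \<beta>) summable_on UNIV"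
    using conv s s' unfolding abs_convergent_below_def by auto
  have bound: "real m * s ^ (m - 1) \<le> 1 / (s * (1 - q)) * s' ^ m" for m
  proof (cases m)
    case (Suc n)
    have "s * s ^ (m - 1) = q ^ m * s' ^ m"
      using Suc by (simp add: qs'[symmetric] power_mult_distrib)
    then have "real m * s ^ (m - 1) = real m * q ^ m * s' ^ m / s"
      using s by (simp add: field_simps)
    also have "\<dots> \<le> 1 / (1 - q) * s' ^ m / s"
      using of_nat_mult_power_le[OF q, of m] s s'
      by (intro divide_right_mono mult_right_mono) auto
    finally show ?thesis by (simp add: mult.commute)
  qed (use s q in simp)
  have "(\<lambda>\<beta>. norm (real (mlen \<beta>) * norm (c \<beta>) * s ^ (mlen \<beta> - 1))) summable_on UNIV"
  proof (rule Infinite_Sum.abs_summable_on_comparison_test'[OF summable_on_cmult_right[OF summable]])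
    fix \<beta>
    show "norm (real (mlen \<beta>) * norm (c \<beta>) * s ^ (mlen \<beta> - 1)) \<le>
        1 / (s * (1 - q)) * (norm (c \<beta>) * s' ^ mlen \<beta>)"
      using mult_left_mono[OF bound[of "mlen \<beta>"], of "norm (c \<beta>)"] s by (simp add: mult_ac)
  qed
  then show ?thesis using s by simp
qed

lemma abs_convergent_below_pderiv_coeffs:
  assumes "abs_convergent_below R c"
  shows "abs_convergent_below R (pderiv_coeffs k c)"
  unfolding abs_convergent_below_def
proof (intro allI impI)
  fix s :: real
  assume s: "0 < s \<and> s < R"
  define f where "f \<beta> = real (\<beta> k) * norm (c \<beta>) * s ^ (mlen \<beta> - 1)" for \<beta>
  have "(\<lambda>\<beta>. norm (f \<beta>)) summable_on UNIV"
    by (rule Infinite_Sum.abs_summable_on_comparison_test'[OF abs_convergent_below_summable_mlen[OF assms, of s]])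
       (use s le_mlen in \<open>auto simp: f_def intro!: mult_right_mono\<close>)
  then have "f summable_on UNIV"
    using s unfolding f_def by simp
  then have "(\<lambda>\<gamma>. f (\<gamma>(k := Suc (\<gamma> k)))) summable_on UNIV"
    using has_sum_shift_multiindex[of k f] by (auto simp: summable_on_def f_def)
  moreover have "f (\<gamma>(k := Suc (\<gamma> k))) = norm (pderiv_coeffs k c \<gamma>) * s ^ mlen \<gamma>" for \<gamma>
    by (simp add: f_def pderiv_coeffs_def norm_mult mlen_fun_upd mlen_split[of \<gamma> k] del: of_nat_Suc)
  ultimately show "(\<lambda>\<gamma>. norm (pderiv_coeffs k c \<gamma>) * s ^ mlen \<gamma>) summable_on UNIV"
    by simp
qed

lemma abs_convergent_below_if_bounded:
  assumes "\<rho> > 0" and bound: "\<And>\<beta>. norm (c \<beta>) \<le> \<rho> ^ mlen \<beta>"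
  shows "abs_convergent_below (1 / \<rho>) c"
  unfolding abs_convergent_below_def
proof (intro allI impI)
  fix s :: real
  assume s: "0 < s \<and> s < 1 / \<rho>"
  then have q: "0 \<le> \<rho> * s" "\<rho> * s < 1"
    using \<open>\<rho> > 0\<close> by (auto simp: field_simps)
  have "(\<lambda>\<beta>. norm (norm (c \<beta>) * s ^ mlen \<beta>)) summable_on UNIV"
  proof (rule Infinite_Sum.abs_summable_on_comparison_test'[OF summable_on_power_mlen[OF q]])
    fix \<beta> :: "'a \<Rightarrow> nat"
    have "norm (c \<beta>) * s ^ mlen \<beta> \<le> \<rho> ^ mlen \<beta> * s ^ mlen \<beta>"
      using bound[of \<beta>] s by (intro mult_right_mono) auto
    then show "norm (norm (c \<beta>) * s ^ mlen \<beta>) \<le> (\<rho> * s) ^ mlen \<beta>"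
      using s by (simp add: power_mult_distrib)
  qed
  then show "(\<lambda>\<beta>. norm (c \<beta>) * s ^ mlen \<beta>) summable_on UNIV"
    using s by simp
qed

lemma norm_mpower_series_term_le:
  assumes "\<And>k. norm (z$k) \<le> s"
  shows "norm (c \<beta> * mmonom \<beta> z) \<le> norm (c \<beta>) * s ^ mlen \<beta>"
  using norm_mmonom_le[OF assms] by (simp add: norm_mult mult_left_mono)

lemma abs_summable_mpower_series:
  assumes conv: "abs_convergent_below R c" and z: "norm z < R"
  shows "(\<lambda>\<beta>. norm (c \<beta> * mmonom \<beta> z)) summable_on UNIV"
proof -
  obtain s where s: "norm z < s" "s < R"
    using dense[OF z] by blast
  then have "(\<lambda>\<beta>. norm (c \<beta>) * s ^ mlen \<beta>) summable_on UNIV"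
    using conv norm_ge_zero[of z] unfolding abs_convergent_below_def by (meson le_less_trans)
  then show ?thesis
    by (rule Infinite_Sum.abs_summable_on_comparison_test'[OF _ norm_mpower_series_term_le])
       (use s norm_nth_le_if_norm_le[of z] in auto)
qed

lemma norm_mpower_series_le:
  assumes conv: "abs_convergent_below R c" and s: "0 < s" "s < R" and z: "norm z \<le> s"
  shows "norm (mpower_series c z) \<le> (\<Sum>\<^sub>\<infinity>\<beta>. norm (c \<beta>) * s ^ mlen \<beta>)"
proof -
  have term_le: "norm (c \<beta> * mmonom \<beta> z) \<le> norm (c \<beta>) * s ^ mlen \<beta>" for \<beta>
    by (rule norm_mpower_series_term_le) (use z norm_nth_le_if_norm_le[of z] in auto)
  have "norm (mpower_series c z) \<le> (\<Sum>\<^sub>\<infinity>\<beta>. norm (c \<beta> * mmonom \<beta> z))"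
    unfolding mpower_series_def
    by (rule norm_infsum_bound) (use abs_summable_mpower_series[OF conv] z s in simp)
  also have "\<dots> \<le> (\<Sum>\<^sub>\<infinity>\<beta>. norm (c \<beta>) * s ^ mlen \<beta>)"
    using abs_summable_mpower_series[OF conv] conv s z term_le
    by (intro infsum_mono) (auto simp: abs_convergent_below_def)
  finally show ?thesis .
qed

lemma has_sum_pderiv_mpower_series:
  assumes conv: "abs_convergent_below R c" and z: "norm z < R"
  shows "((\<lambda>\<beta>. c \<beta> * (of_nat (\<beta> k) * mmonom (\<beta>(k := \<beta> k - 1)) z))
           has_sum mpower_series (pderiv_coeffs k c) z) UNIV"
proof -
  define f where "f \<beta> = c \<beta> * (of_nat (\<beta> k) * mmonom (\<beta>(k := \<beta> k - 1)) z)" for \<beta>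
  have "f (\<gamma>(k := Suc (\<gamma> k))) = pderiv_coeffs k c \<gamma> * mmonom \<gamma> z" for \<gamma>
    by (simp add: f_def pderiv_coeffs_def mult_ac)
  moreover have "((\<lambda>\<gamma>. pderiv_coeffs k c \<gamma> * mmonom \<gamma> z) has_sum mpower_series (pderiv_coeffs k c) z) UNIV"
    unfolding mpower_series_def
    using abs_summable_mpower_series[OF abs_convergent_below_pderiv_coeffs[OF conv] z]
    by (intro has_sum_infsum) (rule abs_summable_summable)
  ultimately have "((\<lambda>\<gamma>. f (\<gamma>(k := Suc (\<gamma> k)))) has_sum mpower_series (pderiv_coeffs k c) z) UNIV"
    by simp
  then have "(f has_sum mpower_series (pderiv_coeffs k c) z) UNIV"
    by (subst (asm) has_sum_shift_multiindex) (simp_all add: f_def)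
  then show ?thesis
    by (simp add: f_def[abs_def])
qed

lemma has_derivative_mpower_series:
  assumes conv: "abs_convergent_below R c" and z: "norm z < R"
  shows "(mpower_series c has_derivative
           (\<lambda>h. \<Sum>k\<in>UNIV. mpower_series (pderiv_coeffs k c) z * h$k)) (at z)"
proof -
  obtain s where s: "norm z < s" "s < R"
    using dense[OF z] by blast
  then have "0 < s"
    using norm_ge_zero[of z] by linarith
  define D where "D \<beta> x h = (\<Sum>k\<in>UNIV. of_nat (\<beta> k) * mmonom (\<beta>(k := \<beta> k - 1)) x * h$k)"
    for \<beta> and x h :: "complex^'a"
  have deriv: "((\<lambda>x. c \<beta> * mmonom \<beta> x) has_derivative (\<lambda>h. c \<beta> * D \<beta> x h)) (at x within ball 0 s)"
    for \<beta> x
    unfolding D_def by (intro has_derivative_mult_right has_derivative_mmonom)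
  have bound: "norm (c \<beta> * D \<beta> x h) \<le> real (mlen \<beta>) * norm (c \<beta>) * s ^ (mlen \<beta> - 1) * norm h"
    if "x \<in> ball 0 s" for \<beta> x h
  proof -
    have "norm (D \<beta> x h) \<le> real (mlen \<beta>) * s ^ (mlen \<beta> - 1) * norm h"
      unfolding D_def
      by (rule norm_mmonom_derivative_le) (use that norm_nth_le_if_norm_le[of x s] \<open>0 < s\<close> in auto)
    then have "norm (c \<beta>) * norm (D \<beta> x h) \<le> norm (c \<beta>) * (real (mlen \<beta>) * s ^ (mlen \<beta> - 1) * norm h)"
      by (rule mult_left_mono) simp
    then show ?thesis
      by (simp add: norm_mult mult_ac)
  qed
  have summable: "(\<lambda>\<beta>. c \<beta> * mmonom \<beta> x) summable_on UNIV" if "x \<in> ball 0 s" for x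
    by (rule abs_summable_summable, rule abs_summable_mpower_series[OF conv]) (use that s(2) in simp)
  have "(mpower_series c has_derivative (\<lambda>h. \<Sum>\<^sub>\<infinity>\<beta>. c \<beta> * D \<beta> z h)) (at z within ball 0 s)"
    unfolding mpower_series_def[abs_def]
    by (rule has_derivative_infsum[OF convex_ball _ deriv bound
          abs_convergent_below_summable_mlen[OF conv \<open>0 < s\<close> s(2)] summable]) (use s in auto)
  then have "(mpower_series c has_derivative (\<lambda>h. \<Sum>\<^sub>\<infinity>\<beta>. c \<beta> * D \<beta> z h)) (at z)"
    using s at_within_open[of z "ball 0 s"] by simp
  moreover have "(\<Sum>\<^sub>\<infinity>\<beta>. c \<beta> * D \<beta> z h) = (\<Sum>k\<in>UNIV. mpower_series (pderiv_coeffs k c) z * h$k)" for h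
  proof -
    have "((\<lambda>\<beta>. \<Sum>k\<in>UNIV. c \<beta> * (of_nat (\<beta> k) * mmonom (\<beta>(k := \<beta> k - 1)) z) * h$k)
        has_sum (\<Sum>k\<in>UNIV. mpower_series (pderiv_coeffs k c) z * h$k)) UNIV"
      by (intro has_sum_sum has_sum_cmult_left has_sum_pderiv_mpower_series[OF conv z]) auto
    then show ?thesis
      by (simp add: D_def infsumI sum_distrib_left mult_ac)
  qed
  ultimately show ?thesis
    by simp
qed

lemma holo_on_mpower_series:
  assumes "abs_convergent_below R c" "r \<le> R"
  shows "holo_on (ball 0 r) (mpower_series c)"
  unfolding holo_on_def
proof (intro conjI ballI exI)
  fix z :: "complex^'a"
  assume "z \<in> ball 0 r"
  with has_derivative_mpower_series[OF assms(1), of z] assms(2)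
  show "(mpower_series c has_derivative (\<lambda>v. \<Sum>k\<in>UNIV. (\<chi> k. mpower_series (pderiv_coeffs k c) z)$k * v$k)) (at z)"
    by simp
qed simp

definition power_series_on_ball ::
    "real \<Rightarrow> (('n::finite \<Rightarrow> nat) \<Rightarrow> complex) \<Rightarrow> (complex^'n \<Rightarrow> complex) \<Rightarrow> bool" where
  "power_series_on_ball R c G \<longleftrightarrow> abs_convergent_below R c \<and> (\<forall>x\<in>ball 0 R. G x = mpower_series c x)"

lemma has_field_derivative_mpower_series_axis:
  assumes conv: "abs_convergent_below R c" and z: "norm z < R"
  shows "((\<lambda>t. mpower_series c (z + axis k t)) has_field_derivative mpower_series (pderiv_coeffs k c) z) (at 0)"
proof -
  have inner: "((\<lambda>t. z + axis k t) has_derivative axis k) (at 0)"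
    using has_derivative_add[OF has_derivative_const bounded_linear_imp_has_derivative[OF bounded_linear_axis]]
    by simp
  have z0: "z + axis k 0 = z"
    by (simp add: axis_def vec_eq_iff)
  have outer: "(mpower_series c has_derivative
      (\<lambda>h. \<Sum>j\<in>UNIV. mpower_series (pderiv_coeffs j c) z * h$j)) (at (z + axis k 0))"
    unfolding z0 by (rule has_derivative_mpower_series[OF conv z])
  have "(\<lambda>t. \<Sum>j\<in>UNIV. mpower_series (pderiv_coeffs j c) z * (axis k t)$j) =
      (\<lambda>t. mpower_series (pderiv_coeffs k c) z * t)"
    by (simp add: axis_def if_distrib[of "\<lambda>x. _ * x"] cong: if_cong)
  then show ?thesis
    using has_derivative_compose[OF inner outer] by (simp add: has_field_derivative_def)
qed

lemma pdiff_power_series_on_ball: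
  assumes "power_series_on_ball R c G"
  shows "power_series_on_ball R (pderiv_coeffs k c) (pdiff k G)"
  unfolding power_series_on_ball_def
proof (intro conjI ballI)
  have conv: "abs_convergent_below R c" and G: "\<And>x. x \<in> ball 0 R \<Longrightarrow> G x = mpower_series c x"
    using assms by (auto simp: power_series_on_ball_def)
  show "abs_convergent_below R (pderiv_coeffs k c)"
    using conv by (rule abs_convergent_below_pderiv_coeffs)
  fix z :: "complex^'a"
  assume z: "z \<in> ball 0 R"
  have "\<forall>\<^sub>F t in nhds 0. G (z + axis k t) = mpower_series c (z + axis k t)"
    unfolding eventually_nhds_metric
  proof (intro exI conjI allI impI)
    show "0 < R - norm z"
      using z by simp
    fix t :: complex
    assume "dist t 0 < R - norm z"
    then have "z + axis k t \<in> ball 0 R"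
      using norm_triangle_ineq[of z "axis k t"] by (simp add: norm_axis)
    then show "G (z + axis k t) = mpower_series c (z + axis k t)"
      by (rule G)
  qed
  then have "pdiff k G z = deriv (\<lambda>t. mpower_series c (z + axis k t)) 0"
    unfolding pdiff_def by (rule deriv_cong_ev[OF _ refl])
  also have "\<dots> = mpower_series (pderiv_coeffs k c) z"
    using has_field_derivative_mpower_series_axis[OF conv] z by (intro DERIV_imp_deriv) simp
  finally show "pdiff k G z = mpower_series (pderiv_coeffs k c) z" .
qed

lemma foldr_pdiff_power_series_on_ball:
  assumes "power_series_on_ball R c G"
  shows "power_series_on_ball R (foldr (\<lambda>j c. (pderiv_coeffs j ^^ \<alpha> j) c) js c)
           (foldr (\<lambda>j G. (pdiff j ^^ \<alpha> j) G) js G)"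
proof (induction js)
  case (Cons j js)
  have "power_series_on_ball R ((pderiv_coeffs j ^^ m) c') ((pdiff j ^^ m) G')"
    if "power_series_on_ball R c' G'" for m c' G'
    using that by (induction m) (simp_all add: pdiff_power_series_on_ball)
  with Cons show ?case
    by simp
qed (simp add: assms)

lemma funpow_pderiv_coeffs:
  "(pderiv_coeffs k ^^ m) c \<beta> = pochhammer (of_nat (Suc (\<beta> k))) m * c (\<beta>(k := \<beta> k + m))"
proof (induction m arbitrary: \<beta>)
  case (Suc m)
  have "(pderiv_coeffs k ^^ Suc m) c \<beta> = of_nat (Suc (\<beta> k)) * (pderiv_coeffs k ^^ m) c (\<beta>(k := Suc (\<beta> k)))"
    by (simp only: funpow.simps comp_def pderiv_coeffs_def)
  also have "\<dots> = of_nat (Suc (\<beta> k)) * (pochhammer (of_nat (Suc (Suc (\<beta> k)))) m * c (\<beta>(k := Suc (\<beta> k) + m)))"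
    by (simp only: Suc.IH fun_upd_same fun_upd_upd)
  also have "\<dots> = pochhammer (of_nat (Suc (\<beta> k))) (Suc m) * c (\<beta>(k := \<beta> k + Suc m))"
    by (simp add: pochhammer_rec add_ac)
  finally show ?case .
qed simp

lemma foldr_pderiv_coeffs:
  assumes "distinct js"
  shows "foldr (\<lambda>j c. (pderiv_coeffs j ^^ \<alpha> j) c) js c \<beta> =
    (\<Prod>j\<in>set js. pochhammer (of_nat (Suc (\<beta> j))) (\<alpha> j)) * c (\<lambda>i. if i \<in> set js then \<beta> i + \<alpha> i else \<beta> i)"
  using assms
proof (induction js arbitrary: \<beta>)
  case (Cons j js)
  define \<beta>' where "\<beta>' = \<beta>(j := \<beta> j + \<alpha> j)"
  have j: "j \<notin> set js" and "distinct js"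
    using Cons.prems by auto
  have "foldr (\<lambda>j c. (pderiv_coeffs j ^^ \<alpha> j) c) (j # js) c \<beta> =
      pochhammer (of_nat (Suc (\<beta> j))) (\<alpha> j) * foldr (\<lambda>j c. (pderiv_coeffs j ^^ \<alpha> j) c) js c \<beta>'"
    by (simp add: funpow_pderiv_coeffs \<beta>'_def)
  also have "\<dots> = pochhammer (of_nat (Suc (\<beta> j))) (\<alpha> j) *
      ((\<Prod>i\<in>set js. pochhammer (of_nat (Suc (\<beta>' i))) (\<alpha> i)) *
       c (\<lambda>i. if i \<in> set js then \<beta>' i + \<alpha> i else \<beta>' i))"
    by (simp only: Cons.IH[OF \<open>distinct js\<close>])
  also have "(\<Prod>i\<in>set js. pochhammer (of_nat (Suc (\<beta>' i))) (\<alpha> i)) =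
      (\<Prod>i\<in>set js. pochhammer (of_nat (Suc (\<beta> i))) (\<alpha> i))"
    by (rule prod.cong) (use j in \<open>auto simp: \<beta>'_def\<close>)
  also have "(\<lambda>i. if i \<in> set js then \<beta>' i + \<alpha> i else \<beta>' i) =
      (\<lambda>i. if i \<in> set (j # js) then \<beta> i + \<alpha> i else \<beta> i)"
    using j by (auto simp: \<beta>'_def)
  finally show ?case
    using j by (simp add: mult.assoc)
qed simp

lemma mpower_series_at_0: "mpower_series c 0 = c (\<lambda>_. 0)"
proof -
  have "mpower_series c 0 = (\<Sum>\<^sub>\<infinity>\<beta>\<in>{\<lambda>_. 0}. c \<beta> * mmonom \<beta> 0)"
    unfolding mpower_series_def
  proof (rule infsum_cong_neutral)
    fix \<beta> :: "'a \<Rightarrow> nat"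
    assume "\<beta> \<in> UNIV - {\<lambda>_. 0}"
    then obtain j where "\<beta> j \<noteq> 0"
      by auto
    then show "c \<beta> * mmonom \<beta> 0 = 0"
      unfolding mmonom_def by (auto intro!: prod_zero)
  qed auto
  then show ?thesis
    by (simp add: mmonom_def)
qed

lemma mderiv_mpower_series_at_0:
  assumes "abs_convergent_below R c" "0 < R"
  shows "mderiv \<alpha> (mpower_series c) 0 = of_nat (mfact \<alpha>) * c \<alpha>"
proof -
  have "power_series_on_ball R c (mpower_series c)"
    using assms by (simp add: power_series_on_ball_def)
  then have "mderiv \<alpha> (mpower_series c) 0 = mpower_series (foldr (\<lambda>j c. (pderiv_coeffs j ^^ \<alpha> j) c) coord_list c) 0"
    using foldr_pdiff_power_series_on_ball[of R c _ \<alpha> coord_list] assms(2)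
    by (simp add: mderiv_def power_series_on_ball_def)
  also have "\<dots> = (\<Prod>j\<in>UNIV. pochhammer 1 (\<alpha> j)) * c \<alpha>"
    by (simp add: mpower_series_at_0 foldr_pderiv_coeffs[OF distinct_coord_list] set_coord_list)
  also have "\<dots> = of_nat (mfact \<alpha>) * c \<alpha>"
    by (simp add: mfact_def pochhammer_fact[symmetric] of_nat_prod)
  finally show ?thesis .
qed

lemma mpower_series_in_A2:
  assumes conv: "abs_convergent_below R c" and r: "0 < r" "r < R"
  shows "mpower_series c \<in> A2 (ball 0 r)"
proof -
  have holo: "holo_on (ball 0 r) (mpower_series c)"
    by (rule holo_on_mpower_series[OF conv]) (use r in simp)
  define M where "M = (\<Sum>\<^sub>\<infinity>\<beta>. norm (c \<beta>) * r ^ mlen \<beta>)"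
  have "(\<lambda>z. (norm (mpower_series c z))\<^sup>2) integrable_on ball 0 r"
  proof (rule measurable_bounded_by_integrable_imp_integrable_real)
    show "(\<lambda>z. (norm (mpower_series c z))\<^sup>2) \<in> borel_measurable (lebesgue_on (ball 0 r))"
      by (rule continuous_imp_measurable_on_sets_lebesgue)
         (auto intro!: continuous_intros holo_on_imp_continuous_on[OF holo])
    show "(\<lambda>z. M\<^sup>2) integrable_on ball 0 r"
      by (rule integrable_on_const) simp
    show "ball 0 r \<in> sets lebesgue"
      by simp
    fix z :: "complex^'a"
    assume "z \<in> ball 0 r"
    then have "norm (mpower_series c z) \<le> M"
      unfolding M_def by (intro norm_mpower_series_le[OF conv r]) simp
    then show "\<bar>(norm (mpower_series c z))\<^sup>2\<bar> \<le> M\<^sup>2"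
      by (simp add: power_mono)
  qed
  with holo show ?thesis
    by (simp add: A2_def)
qed

lemma pairing_mpower_series_at_0:
  assumes "abs_convergent_below R c" "0 < R"
  shows "pairing \<xi> (mpower_series c) 0 = (\<Sum>\<^sub>\<infinity>\<beta>. \<xi> \<beta> * c \<beta>)"
  unfolding pairing_def
  by (rule infsum_cong) (simp add: mderiv_mpower_series_at_0[OF assms] mfact_def)

lemma holo_on_infsum_mult_if_holo_pairings:
  fixes D :: "(complex^'m) set" and \<xi> :: "complex^'m \<Rightarrow> ('n::finite \<Rightarrow> nat) \<Rightarrow> complex"
  assumes hyp: "\<forall>\<Omega>'::(complex^'n) set. \<forall>z0 F. domain \<Omega>' \<and> bounded \<Omega>' \<and> z0 \<in> \<Omega>' \<and> F \<in> A2 \<Omega>'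
           \<longrightarrow> holo_on D (\<lambda>w. pairing (\<xi> w) F z0)"
    and "\<rho> > 0" and "\<And>\<beta>. norm (c \<beta>) \<le> \<rho> ^ mlen \<beta>"
  shows "holo_on D (\<lambda>w. \<Sum>\<^sub>\<infinity>\<beta>. \<xi> w \<beta> * c \<beta>)"
proof -
  define R where "R = 1 / \<rho>"
  have conv: "abs_convergent_below R c" and "R > 0"
    unfolding R_def using abs_convergent_below_if_bounded assms(2,3) by auto
  then have "domain (ball (0::complex^'n) (R / 2))" "bounded (ball (0::complex^'n) (R / 2))"
    "0 \<in> ball (0::complex^'n) (R / 2)" "mpower_series c \<in> A2 (ball 0 (R / 2))"
    by (auto simp: domain_def intro!: mpower_series_in_A2)
  then have "holo_on D (\<lambda>w. pairing (\<xi> w) (mpower_series c) 0)"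
    using hyp by blast
  then show ?thesis
    using pairing_mpower_series_at_0[OF conv \<open>R > 0\<close>] by simp
qed

section \<open>Local uniform boundedness\<close>

lemma Baire_pointwise_bounded_imp_bounded_on_open:
  fixes f :: "'w \<Rightarrow> 'a \<Rightarrow> real"
  assumes X: "compact_space X" "Hausdorff_space X" "topspace X \<noteq> {}"
    and cont: "\<And>w. w \<in> K \<Longrightarrow> continuous_map X euclideanreal (f w)"
    and bounded: "\<And>x. x \<in> topspace X \<Longrightarrow> \<exists>B. \<forall>w\<in>K. f w x \<le> B"
  obtains U N where "openin X U" "U \<noteq> {}" "\<And>x w. x \<in> U \<Longrightarrow> w \<in> K \<Longrightarrow> f w x \<le> N"
proof -
  define E where "E N = {x \<in> topspace X. \<forall>w\<in>K. f w x \<le> real N}" for N :: nat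
  have closed: "closedin X (E N)" for N
  proof -
    have "closedin X {x \<in> topspace X. f w x \<le> real N}" if "w \<in> K" for w
      using closedin_continuous_map_preimage[OF cont[OF that], of "{..real N}"] by simp
    then have "closedin X (\<Inter> (insert (topspace X) ((\<lambda>w. {x \<in> topspace X. f w x \<le> real N}) ` K)))"
      by (intro closedin_Inter) auto
    moreover have "E N = \<Inter> (insert (topspace X) ((\<lambda>w. {x \<in> topspace X. f w x \<le> real N}) ` K))"
      by (auto simp: E_def)
    ultimately show ?thesis
      by simp
  qed
  have cover: "topspace X \<subseteq> (\<Union>N. E N)"
  proof
    fix x
    assume x: "x \<in> topspace X"
    then obtain B where "\<forall>w\<in>K. f w x \<le> B"
      using bounded by blast
    then have "x \<in> E (nat \<lceil>B\<rceil>)"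
      using x unfolding E_def by (auto intro: order.trans[OF _ real_nat_ceiling_ge])
    then show "x \<in> (\<Union>N. E N)"
      by blast
  qed
  have "\<exists>N. X interior_of E N \<noteq> {}"
  proof (rule ccontr)
    assume "\<nexists>N. X interior_of E N \<noteq> {}"
    then have "X interior_of \<Union> (range E) = {}"
      using closed X compact_imp_locally_compact_space compact_Hausdorff_imp_regular_space
      by (intro Baire_category_alt) auto
    moreover have "topspace X \<subseteq> X interior_of \<Union> (range E)"
      using interior_of_mono[OF cover, of X] by simp
    ultimately show False
      using X(3) by blast
  qed
  then obtain N where "X interior_of E N \<noteq> {}"
    by blast
  then show thesis
    using interior_of_subset[of X "E N"] by (intro that[of "X interior_of E N" "real N"]) (auto simp: E_def)
qed

lemma openin_product_topology_contains_cylinder: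
  assumes "openin (product_topology T I) U" "x \<in> U"
  obtains A where "finite A"
    "\<And>y. y \<in> topspace (product_topology T I) \<Longrightarrow> (\<forall>i\<in>A. y i = x i) \<Longrightarrow> y \<in> U"
proof -
  obtain V where V: "finite {i \<in> I. V i \<noteq> topspace (T i)}" "\<forall>i\<in>I. openin (T i) (V i)"
      "x \<in> PiE I V" "PiE I V \<subseteq> U"
    using assms unfolding openin_product_topology_alt by blast
  show thesis
  proof (rule that[OF V(1)])
    fix y
    assume y: "y \<in> topspace (product_topology T I)" "\<forall>i\<in>{i \<in> I. V i \<noteq> topspace (T i)}. y i = x i"
    have "y \<in> PiE I V"
      using y V(3) by (auto simp: PiE_iff)
    then show "y \<in> U"
      using V(4) by blast
  qed
qed

lemma continuous_map_infsum_product_cball: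
  fixes a :: "'i \<Rightarrow> complex"
  assumes summable: "(\<lambda>i. norm (a i) * r i) summable_on UNIV"
  shows "continuous_map (product_topology (\<lambda>i. top_of_set (cball 0 (r i))) UNIV) euclidean
           (\<lambda>c. \<Sum>\<^sub>\<infinity>i. a i * c i)"
proof -
  let ?X = "product_topology (\<lambda>i. top_of_set (cball (0::complex) (r i))) UNIV"
  have bound: "norm (a i * c i) \<le> norm (a i) * r i" if "c \<in> topspace ?X" for c i
  proof -
    have "norm (c i) \<le> r i"
      using that by (auto simp: PiE_iff)
    then show ?thesis
      by (simp add: norm_mult mult_left_mono)
  qed
  have projection: "continuous_map ?X euclidean (\<lambda>c. c i)" for i
    using continuous_map_product_projection[of i UNIV "\<lambda>i. top_of_set (cball (0::complex) (r i))"]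
    unfolding continuous_map_in_subtopology by auto
  have "\<forall>\<^sub>F A in finite_subsets_at_top UNIV. continuous_map ?X Met_TC.mtopology (\<lambda>c. \<Sum>i\<in>A. a i * c i)"
  proof (rule eventually_finite_subsets_at_top_weakI)
    fix A :: "'i set"
    assume "finite A"
    have "continuous_map ?X euclidean (\<lambda>c. a i * c i)" for i
      using projection[of i] by (auto simp: continuous_map_atin intro: tendsto_mult_left)
    with \<open>finite A\<close> show "continuous_map ?X Met_TC.mtopology (\<lambda>c. \<Sum>i\<in>A. a i * c i)"
      unfolding mtopology_is_euclidean by (intro continuous_map_sum)
  qed
  moreover have "uniform_limit (topspace ?X) (\<lambda>A c. \<Sum>i\<in>A. a i * c i) (\<lambda>c. \<Sum>\<^sub>\<infinity>i. a i * c i)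
      (finite_subsets_at_top UNIV)"
    using uniform_limit_infsum[OF summable bound] .
  ultimately have "continuous_map ?X Met_TC.mtopology (\<lambda>c. \<Sum>\<^sub>\<infinity>i. a i * c i)"
    unfolding uniform_limit_iff
    by (intro Met_TC.continuous_map_uniform_limit_alt[where F="finite_subsets_at_top UNIV"]) auto
  then show ?thesis
    unfolding mtopology_is_euclidean .
qed

lemma infsum_mult_conj_phase_outside:
  fixes a :: "'i \<Rightarrow> complex"
  assumes "(\<lambda>i. norm (a i) * r i) summable_on -A"
  shows "(\<Sum>\<^sub>\<infinity>i. a i * (if i \<in> A then 0 else of_real (r i) * sgn (cnj (a i))))
           = of_real (\<Sum>\<^sub>\<infinity>i\<in>-A. norm (a i) * r i)"
proof -
  have "a i * (of_real (r i) * sgn (cnj (a i))) = of_real (norm (a i) * r i)" for i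
    by (simp add: sgn_cnj_mult mult.left_commute[of "a i"])
  then have "(\<Sum>\<^sub>\<infinity>i. a i * (if i \<in> A then 0 else of_real (r i) * sgn (cnj (a i))))
      = (\<Sum>\<^sub>\<infinity>i\<in>-A. of_real (norm (a i) * r i))"
    by (intro infsum_cong_neutral) auto
  also have "\<dots> = of_real (\<Sum>\<^sub>\<infinity>i\<in>-A. norm (a i) * r i)"
    by (rule infsumI[OF has_sum_of_real[OF has_sum_infsum[OF assms]]])
  finally show ?thesis .
qed

lemma infsum_tail_le_twice_bound:
  fixes a c0 :: "'i \<Rightarrow> complex"
  assumes summable: "(\<lambda>i. norm (a i) * r i) summable_on UNIV"
    and c0: "\<And>i. norm (c0 i) \<le> r i"
    and bound: "\<And>c. (\<And>i. norm (c i) \<le> r i) \<Longrightarrow> (\<And>i. i \<in> A \<Longrightarrow> c i = c0 i) \<Longrightarrow>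
                  norm (\<Sum>\<^sub>\<infinity>i. a i * c i) \<le> N"
  shows "(\<Sum>\<^sub>\<infinity>i\<in>-A. norm (a i) * r i) \<le> 2 * N"
proof -
  have r: "0 \<le> r i" for i
    using norm_ge_zero[of "c0 i"] c0[of i] by linarith
  \<comment> \<open>\<open>c\<close> and \<open>c + d\<close> both agree with \<open>c0\<close> on \<open>A\<close>, and pairing \<open>a\<close> with their difference \<open>d\<close>
    gives exactly the tail sum.\<close>
  define c where "c i = (if i \<in> A then c0 i else 0)" for i
  define d where "d i = (if i \<in> A then 0 else of_real (r i) * sgn (cnj (a i)))" for i
  have "norm (of_real (r i) * sgn (cnj (a i))) \<le> r i" for i
    using r[of i] by (simp add: norm_mult norm_sgn)
  then have c: "norm (c i) \<le> r i" and cd: "norm (c i + d i) \<le> r i" and d: "norm (d i) \<le> r i" for i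
    using c0[of i] r[of i] by (simp_all add: c_def d_def)
  have summable_pairing: "(\<lambda>i. a i * e i) summable_on UNIV" if "\<And>i. norm (e i) \<le> r i" for e
    by (intro abs_summable_summable[OF Infinite_Sum.abs_summable_on_comparison_test'[OF summable]])
       (use that in \<open>auto simp: norm_mult intro!: mult_left_mono\<close>)
  have "(\<Sum>\<^sub>\<infinity>i\<in>-A. norm (a i) * r i) \<le> norm (complex_of_real (\<Sum>\<^sub>\<infinity>i\<in>-A. norm (a i) * r i))"
    by simp
  also have "complex_of_real (\<Sum>\<^sub>\<infinity>i\<in>-A. norm (a i) * r i) = (\<Sum>\<^sub>\<infinity>i. a i * d i)"
    unfolding d_def by (rule infsum_mult_conj_phase_outside[symmetric]) (rule summable_on_subset_banach[OF summable], simp)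
  also have "\<dots> = (\<Sum>\<^sub>\<infinity>i. a i * (c i + d i)) - (\<Sum>\<^sub>\<infinity>i. a i * c i)"
    using infsum_add[OF summable_pairing[OF c] summable_pairing[OF d]] by (simp add: distrib_left)
  also have "norm \<dots> \<le> norm (\<Sum>\<^sub>\<infinity>i. a i * (c i + d i)) + norm (\<Sum>\<^sub>\<infinity>i. a i * c i)"
    by (rule norm_triangle_ineq4)
  also have "\<dots> \<le> 2 * N"
    using bound[of "\<lambda>i. c i + d i", OF cd] bound[of c, OF c] by (simp add: c_def d_def)
  finally show ?thesis .
qed

lemma weighted_tail_bounded_on_compact:
  fixes \<xi> :: "'w::metric_space \<Rightarrow> 'i \<Rightarrow> complex"
  assumes K: "compact K"
    and summable: "\<And>w. w \<in> K \<Longrightarrow> (\<lambda>i. norm (\<xi> w i) * r i) summable_on UNIV"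
    and r: "\<And>i. 0 \<le> r i"
    and cont: "\<And>c. (\<And>i. norm (c i) \<le> r i) \<Longrightarrow> continuous_on K (\<lambda>w. \<Sum>\<^sub>\<infinity>i. \<xi> w i * c i)"
  obtains A N where "finite A" "\<And>w. w \<in> K \<Longrightarrow> (\<Sum>\<^sub>\<infinity>i\<in>-A. norm (\<xi> w i) * r i) \<le> N"
proof -
  \<comment> \<open>Baire's theorem on the compact space of admissible coefficient families takes the place
    of the uniform boundedness principle.\<close>
  define X where "X = product_topology (\<lambda>i. top_of_set (cball (0::complex) (r i))) UNIV"
  have topX: "c \<in> topspace X \<longleftrightarrow> (\<forall>i. norm (c i) \<le> r i)" for c
    by (simp add: X_def PiE_UNIV_domain Pi_iff)
  have X: "compact_space X" "Hausdorff_space X" "topspace X \<noteq> {}"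
    using topX[of "\<lambda>_. 0"] r unfolding X_def compact_space_product_topology Hausdorff_space_product_topology
    by (auto intro!: compact_space_subtopology Hausdorff_space_subtopology)
  have contX: "continuous_map X euclideanreal (\<lambda>c. norm (\<Sum>\<^sub>\<infinity>i. \<xi> w i * c i))" if "w \<in> K" for w
    unfolding X_def by (intro continuous_map_norm continuous_map_infsum_product_cball summable that)
  have pointwise: "\<exists>B. \<forall>w\<in>K. norm (\<Sum>\<^sub>\<infinity>i. \<xi> w i * c i) \<le> B" if "c \<in> topspace X" for c
    using continuous_on_compact_bound[OF K cont] that topX by metis
  obtain U N where U: "openin X U" "U \<noteq> {}"
    and N: "\<And>c w. c \<in> U \<Longrightarrow> w \<in> K \<Longrightarrow> norm (\<Sum>\<^sub>\<infinity>i. \<xi> w i * c i) \<le> N"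
    using Baire_pointwise_bounded_imp_bounded_on_open[OF X contX pointwise] by blast
  then obtain c0 where c0: "c0 \<in> U"
    by blast
  obtain A where "finite A" and A: "\<And>c. c \<in> topspace X \<Longrightarrow> (\<forall>i\<in>A. c i = c0 i) \<Longrightarrow> c \<in> U"
    using openin_product_topology_contains_cylinder[OF U(1)[unfolded X_def] c0] unfolding X_def by blast
  show thesis
  proof (rule that[OF \<open>finite A\<close>])
    fix w
    assume "w \<in> K"
    show "(\<Sum>\<^sub>\<infinity>i\<in>-A. norm (\<xi> w i) * r i) \<le> 2 * N"
    proof (rule infsum_tail_le_twice_bound[OF summable[OF \<open>w \<in> K\<close>]])
      show "norm (c0 i) \<le> r i" for i
        using openin_subset[OF U(1)] c0 topX by blast
      show "norm (\<Sum>\<^sub>\<infinity>i. \<xi> w i * c i) \<le> N"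
        if "\<And>i. norm (c i) \<le> r i" "\<And>i. i \<in> A \<Longrightarrow> c i = c0 i" for c
        using N[OF A \<open>w \<in> K\<close>] that topX by blast
    qed
  qed
qed

lemma weighted_norm_infsum_bounded_on_compact:
  fixes \<xi> :: "'w::metric_space \<Rightarrow> 'i \<Rightarrow> complex"
  assumes K: "compact K"
    and summable: "\<And>w. w \<in> K \<Longrightarrow> (\<lambda>i. norm (\<xi> w i) * r i) summable_on UNIV"
    and r: "\<And>i. 0 \<le> r i"
    and cont: "\<And>c. (\<And>i. norm (c i) \<le> r i) \<Longrightarrow> continuous_on K (\<lambda>w. \<Sum>\<^sub>\<infinity>i. \<xi> w i * c i)"
  shows "\<exists>B. \<forall>w\<in>K. (\<Sum>\<^sub>\<infinity>i. norm (\<xi> w i) * r i) \<le> B"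
proof -
  obtain A N where "finite A" and tail: "\<And>w. w \<in> K \<Longrightarrow> (\<Sum>\<^sub>\<infinity>i\<in>-A. norm (\<xi> w i) * r i) \<le> N"
    using weighted_tail_bounded_on_compact[OF assms] by blast
  have "continuous_on K (\<lambda>w. \<xi> w i * of_real (r i))" for i
    using cont[of "\<lambda>j. if j = i then of_real (r i) else 0"] r by (simp add: infsum_mult_delta)
  then have "continuous_on K (\<lambda>w. \<Sum>i\<in>A. norm (\<xi> w i * of_real (r i)))"
    by (intro continuous_on_sum continuous_on_norm)
  then obtain M where "M \<ge> 0" and M: "\<And>w. w \<in> K \<Longrightarrow> norm (\<Sum>i\<in>A. norm (\<xi> w i * of_real (r i))) \<le> M"
    by (rule continuous_on_compact_bound[OF K]) blast
  have "(\<Sum>\<^sub>\<infinity>i. norm (\<xi> w i) * r i) \<le> M + N" if "w \<in> K" for w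
  proof -
    have "(\<Sum>\<^sub>\<infinity>i. norm (\<xi> w i) * r i) = (\<Sum>i\<in>A. norm (\<xi> w i) * r i) + (\<Sum>\<^sub>\<infinity>i\<in>-A. norm (\<xi> w i) * r i)"
      using infsum_Diff[OF summable[OF that], of A] \<open>finite A\<close> by (simp add: Compl_eq_Diff_UNIV)
    also have "(\<Sum>i\<in>A. norm (\<xi> w i) * r i) \<le> M"
      using M[OF that] r by (simp add: norm_mult abs_of_nonneg sum_nonneg)
    finally show ?thesis
      using tail[OF that] by linarith
  qed
  then show ?thesis
    by blast
qed

lemma loc_unif_bounded_if_continuous_pairings:
  fixes \<xi> :: "complex^'m \<Rightarrow> ('n::finite \<Rightarrow> nat) \<Rightarrow> complex"
  assumes "open D" and ell1: "\<forall>w\<in>D. ell1 (\<xi> w)"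
    and cont: "\<And>\<rho> c. \<rho> > 0 \<Longrightarrow> (\<And>\<beta>. norm (c \<beta>) \<le> \<rho> ^ mlen \<beta>) \<Longrightarrow>
                 continuous_on D (\<lambda>w. \<Sum>\<^sub>\<infinity>\<beta>. \<xi> w \<beta> * c \<beta>)"
  shows "loc_unif_bounded D \<xi>"
  unfolding loc_unif_bounded_def
proof (intro ballI allI impI)
  fix w0 and \<rho> :: real
  assume "w0 \<in> D" "\<rho> > 0"
  then obtain \<delta> where "\<delta> > 0" and \<delta>: "cball w0 \<delta> \<subseteq> D"
    using \<open>open D\<close> open_contains_cball by blast
  obtain B where B: "\<forall>w\<in>cball w0 \<delta>. (\<Sum>\<^sub>\<infinity>\<beta>. norm (\<xi> w \<beta>) * \<rho> ^ mlen \<beta>) \<le> B"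
  proof (atomize_elim, rule weighted_norm_infsum_bounded_on_compact)
    show "(\<lambda>\<beta>. norm (\<xi> w \<beta>) * \<rho> ^ mlen \<beta>) summable_on UNIV" if "w \<in> cball w0 \<delta>" for w
      using ell1 \<open>\<rho> > 0\<close> that \<delta> unfolding ell1_def by blast
    show "continuous_on (cball w0 \<delta>) (\<lambda>w. \<Sum>\<^sub>\<infinity>\<beta>. \<xi> w \<beta> * c \<beta>)"
      if "\<And>\<beta>. norm (c \<beta>) \<le> \<rho> ^ mlen \<beta>" for c
      using cont[OF \<open>\<rho> > 0\<close> that] \<delta> by (rule continuous_on_subset)
  qed (use \<open>\<rho> > 0\<close> in auto)
  show "\<exists>V. open V \<and> w0 \<in> V \<and> V \<subseteq> D \<and>
      (\<exists>B. \<forall>w'\<in>V. (\<Sum>\<^sub>\<infinity>\<alpha>. norm (\<xi> w' \<alpha>) * \<rho> ^ mlen \<alpha>) \<le> B)"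
  proof (intro exI conjI)
    show "open (ball w0 \<delta>)" "w0 \<in> ball w0 \<delta>"
      using \<open>\<delta> > 0\<close> by simp_all
    show "ball w0 \<delta> \<subseteq> D"
      using ball_subset_cball \<delta> by blast
    show "\<forall>w'\<in>ball w0 \<delta>. (\<Sum>\<^sub>\<infinity>\<alpha>. norm (\<xi> w' \<alpha>) * \<rho> ^ mlen \<alpha>) \<le> B"
      using B ball_subset_cball by blast
  qed
qed

theorem mainTheorem6:
  fixes D :: "(complex^'m) set"
    and \<xi> :: "complex^'m \<Rightarrow> ('n::finite \<Rightarrow> nat) \<Rightarrow> complex"
  assumes "domain D"
    and "\<forall>w\<in>D. ell1 (\<xi> w)"
    and "\<forall>\<Omega>'::(complex^'n) set. \<forall>z0 F. domain \<Omega>' \<and> bounded \<Omega>' \<and> z0 \<in> \<Omega>' \<and> F \<in> A2 \<Omega>'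
           \<longrightarrow> holo_on D (\<lambda>w. pairing (\<xi> w) F z0)"
  shows "(\<forall>\<alpha>. holo_on D (\<lambda>w. \<xi> w \<alpha>)) \<and> loc_unif_bounded D \<xi>"
proof
  have pairings: "holo_on D (\<lambda>w. \<Sum>\<^sub>\<infinity>\<beta>. \<xi> w \<beta> * c \<beta>)"
    if "\<rho> > 0" "\<And>\<beta>. norm (c \<beta>) \<le> \<rho> ^ mlen \<beta>" for \<rho> c
    using holo_on_infsum_mult_if_holo_pairings[OF assms(3) that] .
  show "\<forall>\<alpha>. holo_on D (\<lambda>w. \<xi> w \<alpha>)"
    using pairings[of 1 "\<lambda>\<beta>. if \<beta> = \<alpha> then 1 else 0" for \<alpha>] by (simp add: infsum_mult_delta)
  show "loc_unif_bounded D \<xi>"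
  proof (rule loc_unif_bounded_if_continuous_pairings)
    show "open D"
      using assms(1) by (simp add: domain_def)
    show "continuous_on D (\<lambda>w. \<Sum>\<^sub>\<infinity>\<beta>. \<xi> w \<beta> * c \<beta>)"
      if "\<rho> > 0" "\<And>\<beta>. norm (c \<beta>) \<le> \<rho> ^ mlen \<beta>" for \<rho> c
      using pairings[OF that] by (rule holo_on_imp_continuous_on)
  qed (rule assms(2))
qed

end
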